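(* Let $n\geq 2$ be an integer and let $\psi,\phi$ be homogeneous and bi-Lipschitz (as defined in the context). Then the map $H:\mathbb{R}^{2\times n}\to\mathbb{R}^m$ defined in the context is bi-Lipschitz with respect to $d_{\mathcal{G}_{+}}$: there exist constants $0<a\leq b$ such that for all ${X},{Y}\in\mathbb{R}^{2\times n}$, $$a\, d_{\mathcal{G}_{+}}({X},{Y})\leq\|H({X})-H({Y})\|_\infty\leq b\, d_{\mathcal{G}_{+}}({X},{Y}).$$
   Context: For ${X}\in\mathbb{R}^{2\times n}$ with columns $x_1,\dots,x_n$, let $\bar{X}$ be its centralization, i.e. the point set with columns $x_j-\frac1n\sum_k x_k$. For $x=[a,b]\in\mathbb{R}^2$ write $x^\perp=[-b,a]$. If $\bar{X}=0$ set $H({X})=0_m$. Otherwise, writing $x_1,\dots,x_n$ for the columns of $\bar X$, define $$h_i=\psi\Big(\|x_i\|_2,\ \{\!\{\big(\tfrac{x_i\cdot x_j}{\|\bar X\|_F},\tfrac{x_i^\perp\cdot x_j}{\|\bar X\|_F},\|x_j\|_2\big)\mid j\in[n]\setminus\{i\}\}\!\}\Big),\qquad H({X})=\phi(\{\!\{h_i\mid i\in[n]\}\!\}).$$ For multisets $S=\{\!\{s_1,\dots,s_N\}\!\}$, $S'=\{\!\{s'_1,\dots,s'_N\}\!\}$ of vectors in a Euclidean space, $\mathcal{W}_\infty(S,S')=\min_{\tau\in S_N}\max_{i}\|s_i-s'_{\tau(i)}\|_\infty$. The function $\phi$ (on multisets of $n$ vectors) is bi-Lipschitz if there are $0<c_\phi\le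 C_\phi$ with $c_\phi\mathcal{W}_\infty(S,S')\le\|\phi(S)-\phi(S')\|_\infty\le C_\phi\mathcal{W}_\infty(S,S')$; the function $\psi$ (on pairs of a vector and a multiset of $n-1$ vectors) is bi-Lipschitz if there are $0<c_\psi\le C_\psi$ with $c_\psi\max\{\|v-v'\|_\infty,\mathcal{W}_\infty(S,S')\}\le\|\psi(v,S)-\psi(v',S')\|_\infty\le C_\psi\max\{\|v-v'\|_\infty,\mathcal{W}_\infty(S,S')\}$. Homogeneity means $\phi(tS)=t\phi(S)$ and $\psi(tv,tS)=t\psi(v,S)$ for all $t>0$ (where $tS$ scales every element). The group $\mathcal{G}_{+}$ acts on $\mathbb{R}^{2\times n}$ by column permutations, a common proper rotation $R\in SO(2)$, and a common translation; $d_{\mathcal{G}_{+}}({X},{Y})=\min_{(\pi,R,t)\in S_n\times SO(2)\times\mathbb{R}^2}\big[\sum_j\|x_j-Ry_{\pi(j)}+t\|_2^2\big]^{1/2}$. *)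

theory Defs
  imports "HOL-Analysis.Analysis" "HOL-Library.Multiset"
begin

text \<open>A point set X in R^(2 x n) is a matrix  X :: real^2^'n  whose columns X$j :: real^2
  are indexed by the finite type 'n (so n = CARD('n)).  The sup-norm on R^k is  infnorm.\<close>

definition perp2 :: "real^2 \<Rightarrow> real^2" where
  "perp2 x = vector [- (x$2), x$1]"

definition centralize :: "real^2^'n \<Rightarrow> real^2^'n" where
  "centralize X = (\<chi> j. X$j - (1 / real CARD('n)) *\<^sub>R (\<Sum>k\<in>UNIV. X$k))"

text \<open>W_infinity distance between two multisets of the same size: minimum over all
  matchings (enumerations as lists) of the largest sup-norm difference.\<close>
definition Winf :: "'a::euclidean_space multiset \<Rightarrow> 'a multiset \<Rightarrow> real" where
  "Winf S T = (INF p \<in> {(xs, ys). mset xs = S \<and> mset ys = T}.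
      Max (insert 0 ((\<lambda>i. infnorm (fst p ! i - snd p ! i)) ` {..<length (fst p)})))"

definition homog_phi :: "nat \<Rightarrow> ('a::real_vector multiset \<Rightarrow> 'b::real_vector) \<Rightarrow> bool" where
  "homog_phi N phi \<longleftrightarrow> (\<forall>S t. size S = N \<and> t > 0 \<longrightarrow>
      phi (image_mset (scaleR t) S) = t *\<^sub>R phi S)"

definition homog_psi :: "nat \<Rightarrow> ('v::real_vector \<Rightarrow> 'a::real_vector multiset \<Rightarrow> 'b::real_vector) \<Rightarrow> bool" where
  "homog_psi N psi \<longleftrightarrow> (\<forall>v S t. size S = N \<and> t > 0 \<longrightarrow>
      psi (t *\<^sub>R v) (image_mset (scaleR t) S) = t *\<^sub>R psi v S)"

definition bilip_phi :: "nat \<Rightarrow> ('a::euclidean_space multiset \<Rightarrow> 'b::euclidean_space) \<Rightarrow> bool" where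
  "bilip_phi N phi \<longleftrightarrow> (\<exists>c C. 0 < c \<and> c \<le> C \<and> (\<forall>S S'. size S = N \<and> size S' = N \<longrightarrow>
      c * Winf S S' \<le> infnorm (phi S - phi S') \<and> infnorm (phi S - phi S') \<le> C * Winf S S'))"

definition bilip_psi :: "nat \<Rightarrow> ('v::euclidean_space \<Rightarrow> 'a::euclidean_space multiset \<Rightarrow> 'b::euclidean_space) \<Rightarrow> bool" where
  "bilip_psi N psi \<longleftrightarrow> (\<exists>c C. 0 < c \<and> c \<le> C \<and> (\<forall>v v' S S'. size S = N \<and> size S' = N \<longrightarrow>
      c * max (infnorm (v - v')) (Winf S S') \<le> infnorm (psi v S - psi v' S') \<and>
      infnorm (psi v S - psi v' S') \<le> C * max (infnorm (v - v')) (Winf S S')))"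

text \<open>The invariant H.  The Frobenius norm of a matrix real^2^'n is its norm.\<close>
definition Hmap :: "(real \<Rightarrow> (real^3) multiset \<Rightarrow> 'd::euclidean_space) \<Rightarrow> ('d multiset \<Rightarrow> 'e::zero)
    \<Rightarrow> real^2^'n \<Rightarrow> 'e" where
  "Hmap psi phi X = (let Xc = centralize X in
     if Xc = 0 then 0 else
     phi (image_mset (\<lambda>i. psi (norm (Xc$i))
            (image_mset (\<lambda>j. vector [(Xc$i \<bullet> Xc$j) / norm Xc, (perp2 (Xc$i) \<bullet> Xc$j) / norm Xc, norm (Xc$j)])
               (mset_set (UNIV - {i}))))
          (mset_set UNIV)))"

definition SO2 :: "(real^2^2) set" where
  "SO2 = {R. orthogonal_matrix R \<and> det R = 1}"

definition dGplus :: "real^2^'n \<Rightarrow> real^2^'n \<Rightarrow> real" where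
  "dGplus X Y = (INF p \<in> {(\<pi>, R, t). \<pi> permutes (UNIV :: 'n set) \<and> R \<in> SO2}.
      (case p of (\<pi>, R, t) \<Rightarrow> sqrt (\<Sum>j\<in>UNIV. (norm (X$j - R *v Y$(\<pi> j) + t))\<^sup>2)))"

end

(* H is blind to the group: centralisation removes translations, and the triples
   (x_i . x_j, x_i^perp . x_j, |x_j|) are unchanged by a proper rotation and are permuted along
   with the points. Each triple is Lipschitz in the centred configuration and centralisation is a
   contraction, which gives the upper bound.
   For the lower bound, the lower Lipschitz bounds of phi and psi turn a small |H X - H Y| into a
   matching sigma of the h_i and, at a point x_i of maximal norm, a matching pi of the triples of
   x_i with those of y_(sigma i). The rotation taking y_(sigma i) to the direction of x_i then moves
   every y_(pi j) close to x_j, because a point is determined by its coordinates in the frame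
   (x_i, x_i^perp). Maximality of |x_i| gives |X| <= sqrt n |x_i|, which controls the change of
   normalisation from |X| (used in the triples) to |x_i| (used in the frame). *)

theory Submission
  imports Defs "HOL-Combinatorics.Multiset_Permutations"
begin

section \<open>Rotations of the plane\<close>

lemma perp2_nth [simp]: "perp2 x $ 1 = - (x $ 2)" "perp2 x $ 2 = x $ 1"
  by (simp_all add: perp2_def)

lemma inner_real2: "(x::real^2) \<bullet> y = x$1 * y$1 + x$2 * y$2"
  by (simp add: inner_vec_def sum_2)

lemma power2_norm_real2: "(norm (x::real^2))\<^sup>2 = (x$1)\<^sup>2 + (x$2)\<^sup>2"
  unfolding power2_norm_eq_inner by (simp add: inner_real2 power2_eq_square)

lemma norm_perp2 [simp]: "norm (perp2 x) = norm x"
  by (simp add: norm_eq_sqrt_inner inner_real2 algebra_simps)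

lemma perp2_diff: "perp2 (x - y) = perp2 x - perp2 y"
  by (simp add: vec_eq_iff forall_2)

lemma perp2_scaleR: "perp2 (c *\<^sub>R x) = c *\<^sub>R perp2 x"
  by (simp add: vec_eq_iff forall_2)

lemma norm_frame_coordinates:
  "(norm x)\<^sup>2 * (norm z)\<^sup>2 = (z \<bullet> x)\<^sup>2 + (z \<bullet> perp2 x)\<^sup>2"
  unfolding power2_norm_real2 inner_real2 perp2_nth by algebra

lemma matrix_vector_mult_real2_nth:
  "((R::real^2^2) *v v) $ 1 = R$1$1 * v$1 + R$1$2 * v$2"
  "((R::real^2^2) *v v) $ 2 = R$2$1 * v$1 + R$2$2 * v$2"
  by (simp_all add: matrix_vector_mult_def sum_2)

lemma SO2_entries:
  assumes "R \<in> SO2"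
  shows "R$2$2 = R$1$1" "R$1$2 = - R$2$1" "(R$1$1)\<^sup>2 + (R$2$1)\<^sup>2 = 1"
proof -
  have orth: "(transpose R ** R) $ i $ j = (mat 1 :: real^2^2) $ i $ j" for i j
    using assms by (simp add: SO2_def orthogonal_matrix)
  have col1: "R$1$1 * R$1$1 + R$2$1 * R$2$1 = 1" and col2: "R$1$2 * R$1$2 + R$2$2 * R$2$2 = 1"
    using orth[of 1 1] orth[of 2 2]
    by (simp_all add: matrix_matrix_mult_def sum_2 transpose_def mat_def)
  have det: "R$1$1 * R$2$2 - R$1$2 * R$2$1 = 1"
    using assms by (simp add: SO2_def det_2)
  have "(R$2$2 - R$1$1)\<^sup>2 + (R$1$2 + R$2$1)\<^sup>2 = 0"
    using col1 col2 det by (simp add: power2_eq_square algebra_simps)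
  then show "R$2$2 = R$1$1" "R$1$2 = - R$2$1"
    by simp_all
  show "(R$1$1)\<^sup>2 + (R$2$1)\<^sup>2 = 1"
    using col1 by (simp add: power2_eq_square)
qed

lemma rotation_matrix_SO2:
  assumes "c\<^sup>2 + s\<^sup>2 = 1"
  shows "vector [vector [c, - s], vector [s, c]] \<in> SO2"
  using assms
  by (simp add: SO2_def orthogonal_matrix_def vec_eq_iff forall_2 matrix_matrix_mult_def sum_2
      transpose_def mat_def det_2 power2_eq_square)

lemma mat_1_SO2: "mat 1 \<in> SO2"
  by (simp add: SO2_def orthogonal_matrix_id)

lemma SO2_perp2: "R \<in> SO2 \<Longrightarrow> R *v perp2 v = perp2 (R *v v)"
  using SO2_entries[of R] by (simp add: vec_eq_iff forall_2 matrix_vector_mult_real2_nth)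

lemma SO2_inner: "R \<in> SO2 \<Longrightarrow> (R *v u) \<bullet> (R *v v) = u \<bullet> v"
proof -
  assume R: "R \<in> SO2"
  have "(R *v u) \<bullet> (R *v v) = ((R$1$1)\<^sup>2 + (R$2$1)\<^sup>2) * (u \<bullet> v)"
    using SO2_entries(1,2)[OF R]
    by (simp add: inner_real2 matrix_vector_mult_real2_nth power2_eq_square algebra_simps)
  then show ?thesis using SO2_entries(3)[OF R] by simp
qed

lemma SO2_norm: "R \<in> SO2 \<Longrightarrow> norm (R *v u) = norm u"
  using SO2_inner[of R u u] by (simp add: norm_eq_sqrt_inner)

lemma SO2_transitive_on_circles:
  assumes "norm x = norm (y::real^2)"
  obtains R where "R \<in> SO2" "R *v y = x"
proof (cases "y = 0")
  case True
  then show ?thesis using assms that[OF mat_1_SO2] by simp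
next
  case False
  define r where "r = (norm y)\<^sup>2"
  have r: "r \<noteq> 0" "r = (y$1)\<^sup>2 + (y$2)\<^sup>2" "r = (x$1)\<^sup>2 + (x$2)\<^sup>2"
    using False assms by (simp_all add: r_def power2_norm_real2 flip: power2_norm_real2)
  define c where "c = (x$1 * y$1 + x$2 * y$2) / r"
  define s where "s = (x$2 * y$1 - x$1 * y$2) / r"
  have cr: "c * r = x$1 * y$1 + x$2 * y$2" and sr: "s * r = x$2 * y$1 - x$1 * y$2"
    using r(1) by (simp_all add: c_def s_def)
  have "(c\<^sup>2 + s\<^sup>2) * r\<^sup>2 = 1 * r\<^sup>2"
    using cr sr r(2,3) by algebra
  then have unit: "c\<^sup>2 + s\<^sup>2 = 1" using r(1) by simp
  have "(c * y$1 - s * y$2) * r = x$1 * r" "(s * y$1 + c * y$2) * r = x$2 * r"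
    using cr sr r(2) by algebra+
  then have "vector [vector [c, - s], vector [s, c]] *v y = x"
    using r(1) by (simp add: vec_eq_iff forall_2 matrix_vector_mult_real2_nth)
  with unit show ?thesis using that rotation_matrix_SO2 by blast
qed

lemma norm_diff_in_frames:
  fixes x y u w :: "real^2"
  assumes "x \<noteq> 0" "y \<noteq> 0" and R: "R \<in> SO2" "R *v y = (norm y / norm x) *\<^sub>R x"
  shows "(norm (u - R *v w))\<^sup>2 =
    ((u \<bullet> x) / norm x - (w \<bullet> y) / norm y)\<^sup>2 + ((u \<bullet> perp2 x) / norm x - (w \<bullet> perp2 y) / norm y)\<^sup>2"
proof -
  have n: "norm x > 0" "norm y > 0" using assms by auto
  have x: "x = (norm x / norm y) *\<^sub>R (R *v y)" using R(2) n by simp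
  have "(R *v w) \<bullet> x = (norm x / norm y) * (w \<bullet> y)"
    by (subst x) (simp add: SO2_inner[OF R(1)])
  moreover have "(R *v w) \<bullet> perp2 x = (norm x / norm y) * (w \<bullet> perp2 y)"
    by (subst x) (simp add: perp2_scaleR SO2_perp2[OF R(1), symmetric] SO2_inner[OF R(1)])
  ultimately have
    "(u - R *v w) \<bullet> x = norm x * ((u \<bullet> x) / norm x - (w \<bullet> y) / norm y)"
    "(u - R *v w) \<bullet> perp2 x = norm x * ((u \<bullet> perp2 x) / norm x - (w \<bullet> perp2 y) / norm y)"
    using n by (simp_all add: inner_diff_left field_simps)
  then have "(norm x)\<^sup>2 * (norm (u - R *v w))\<^sup>2 = (norm x)\<^sup>2 *
      (((u \<bullet> x) / norm x - (w \<bullet> y) / norm y)\<^sup>2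
      + ((u \<bullet> perp2 x) / norm x - (w \<bullet> perp2 y) / norm y)\<^sup>2)"
    unfolding norm_frame_coordinates by (simp add: power_mult_distrib distrib_left)
  then show ?thesis
    using n by simp
qed

lemma abs_inner_le_mult:
  fixes a b :: "'a::real_inner"
  shows "norm a \<le> N \<Longrightarrow> norm b \<le> M \<Longrightarrow> \<bar>a \<bullet> b\<bar> \<le> N * M"
  by (meson Cauchy_Schwarz_ineq2 mult_mono' norm_ge_zero order_trans)

lemma normalized_inner_diff_le:
  fixes a b a' b' :: "'a::real_inner"
  assumes "norm a \<le> N" "norm b \<le> N" "norm a' \<le> M" "norm b' \<le> M"
    and "norm (a - a') \<le> d" "norm (b - b') \<le> d" "\<bar>N - M\<bar> \<le> d"
  shows "\<bar>(a \<bullet> b) / N - (a' \<bullet> b') / M\<bar> \<le> 3 * d"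
proof -
  have ordered: "\<bar>(a \<bullet> b) / N - (a' \<bullet> b') / M\<bar> \<le> 3 * d"
    if "norm a \<le> N" "norm b \<le> N" "norm a' \<le> M" "norm b' \<le> M" "M \<le> N"
      "norm (a - a') \<le> d" "norm (b - b') \<le> d" "\<bar>N - M\<bar> \<le> d"
    for a b a' b' :: 'a and N M
  proof -
    have d: "0 \<le> d" using that(6) norm_ge_zero order_trans by blast
    have M: "0 \<le> M" using that(3) norm_ge_zero order_trans by blast
    have "(a \<bullet> b) / N - (a' \<bullet> b') / M
        = ((a - a') \<bullet> b + a' \<bullet> (b - b')) / N + (a' \<bullet> b') * (1 / N - 1 / M)"
      by (simp add: diff_divide_distrib add_divide_distrib algebra_simps)
    moreover have "\<bar>((a - a') \<bullet> b + a' \<bullet> (b - b')) / N\<bar> \<le> 2 * d"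
    proof -
      have "\<bar>(a - a') \<bullet> b + a' \<bullet> (b - b')\<bar> \<le> d * N + N * d"
        using abs_inner_le_mult[OF that(6,2)] abs_inner_le_mult[of a' N "b - b'" d] that(3,5,7)
        by (smt (verit))
      moreover have "0 \<le> N" using that(2) norm_ge_zero order_trans by blast
      ultimately show ?thesis using d by (simp add: divide_le_eq mult.commute mult.left_commute)
    qed
    moreover have "\<bar>(a' \<bullet> b') * (1 / N - 1 / M)\<bar> \<le> d"
    proof (cases "M = 0")
      case False
      then have MN: "0 < M" "0 < N" using M that(5) by auto
      have "\<bar>(a' \<bullet> b') * (1 / N - 1 / M)\<bar> \<le> (M * M) * (d / (N * M))"
        unfolding abs_mult using abs_inner_le_mult[OF that(3,4)] that(8) MN
        by (intro mult_mono) (auto simp: field_simps abs_minus_commute)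
      also have "\<dots> \<le> d" using MN that(5) d by (simp add: field_simps mult_right_mono)
      finally show ?thesis .
    qed (use that(3) d in simp)
    ultimately show ?thesis by linarith
  qed
  show ?thesis
  proof (cases "M \<le> N")
    case False
    then show ?thesis
      using ordered[where a=a' and b=b' and a'=a and b'=b and N=M and M=N] assms
      by (simp add: norm_minus_commute abs_minus_commute)
  qed (use ordered assms in blast)
qed

lemma infnorm_real: "infnorm (a::real) = \<bar>a\<bar>"
  by (simp add: infnorm_def)

lemma infnorm_real3_le:
  assumes "\<bar>v$1\<bar> \<le> B" "\<bar>v$2\<bar> \<le> B" "\<bar>v$3\<bar> \<le> B"
  shows "infnorm (v::real^3) \<le> B"
proof -
  have "\<bar>v$i\<bar> \<le> B" for i
    using exhaust_3[of i] assms by auto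
  then show ?thesis
    unfolding infnorm_cart by (intro cSup_least) auto
qed

lemma rescaled_quotient_diff_le:
  fixes A B N M nx ny s d :: real
  assumes pos: "0 < N" "0 < M" "0 < nx" "0 < ny" "0 \<le> s"
    and close: "\<bar>A / N - B / M\<bar> \<le> d" "\<bar>nx - ny\<bar> \<le> d" "\<bar>N - M\<bar> \<le> s * d"
    and bounds: "N \<le> s * nx" "\<bar>B\<bar> \<le> ny * M"
  shows "\<bar>A / nx - B / ny\<bar> \<le> 3 * s * d"
proof -
  have d: "0 \<le> d" using close(1) by linarith
  have ratio: "N / nx \<le> s" using bounds(1) pos by (simp add: divide_le_eq mult.commute)
  have "A / nx - B / ny = (A / N - B / M) * (N / nx) + (B / (M * nx * ny)) * (N * ny - M * nx)"
    using pos by (simp add: field_simps)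
  moreover have "\<bar>(A / N - B / M) * (N / nx)\<bar> \<le> d * s"
    unfolding abs_mult using close(1) ratio pos d by (intro mult_mono) auto
  moreover note abs_triangle_ineq[of "(A / N - B / M) * (N / nx)"
    "(B / (M * nx * ny)) * (N * ny - M * nx)"]
  moreover have "\<bar>(B / (M * nx * ny)) * (N * ny - M * nx)\<bar> \<le> 2 * s * d"
  proof -
    have "\<bar>B / (M * nx * ny)\<bar> \<le> 1 / nx"
      using bounds(2) pos by (simp add: divide_le_eq field_simps)
    moreover have "\<bar>N * ny - M * nx\<bar> \<le> N * d + nx * (s * d)"
    proof -
      have "\<bar>N * ny - M * nx\<bar> = \<bar>N * (ny - nx) + nx * (N - M)\<bar>" by (simp add: algebra_simps)
      also have "\<dots> \<le> N * \<bar>ny - nx\<bar> + nx * \<bar>N - M\<bar>"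
        using pos by (simp add: abs_mult abs_triangle_ineq[THEN order_trans])
      also have "\<dots> \<le> N * d + nx * (s * d)"
        using close pos by (intro add_mono mult_left_mono) (auto simp: abs_minus_commute)
      finally show ?thesis .
    qed
    ultimately have "\<bar>(B / (M * nx * ny)) * (N * ny - M * nx)\<bar> \<le> (1 / nx) * (N * d + nx * (s * d))"
      unfolding abs_mult using pos by (intro mult_mono) auto
    also have "\<dots> = (N / nx) * d + s * d" using pos by (simp add: field_simps)
    also have "\<dots> \<le> 2 * s * d" using mult_right_mono[OF ratio d] by linarith
    finally show ?thesis .
  qed
  ultimately show ?thesis by (simp add: mult.commute)
qed

lemma norm_vec_eq_sqrt_sum: "norm (z::'a::real_normed_vector^'n) = sqrt (\<Sum>j\<in>UNIV. (norm (z$j))\<^sup>2)"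
  by (simp add: norm_vec_def L2_set_def)

lemma power2_norm_vec_eq_sum: "(norm (z::'a::real_normed_vector^'n))\<^sup>2 = (\<Sum>j\<in>UNIV. (norm (z$j))\<^sup>2)"
  by (simp add: norm_vec_eq_sqrt_sum sum_nonneg)

lemma norm_vec_le_sqrt_card_mult:
  fixes z :: "'a::real_normed_vector^'n"
  assumes "\<And>j. norm (z$j) \<le> e"
  shows "norm z \<le> sqrt CARD('n) * e"
proof -
  have "0 \<le> e" using assms[of undefined] norm_ge_zero order_trans by blast
  have "(\<Sum>j\<in>UNIV. (norm (z$j))\<^sup>2) \<le> (\<Sum>j\<in>(UNIV::'n set). e\<^sup>2)"
    using assms by (intro sum_mono power_mono) auto
  then have "norm z \<le> sqrt (CARD('n) * e\<^sup>2)"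
    by (simp add: norm_vec_eq_sqrt_sum)
  with \<open>0 \<le> e\<close> show ?thesis by (simp add: real_sqrt_mult)
qed

lemma norm_vec_column_norms: "norm (\<chi> j. norm (z$j)) = norm (z::'a::real_normed_vector^'n)"
  by (simp add: norm_vec_eq_sqrt_sum)

lemma norm_vec_permute: "bij \<pi> \<Longrightarrow> norm (\<chi> j. z$(\<pi> j)) = norm (z::'a::real_normed_vector^'n)"
  by (simp add: norm_vec_eq_sqrt_sum sum.reindex_bij_betw[of \<pi> UNIV UNIV "\<lambda>j. (norm (z$j))\<^sup>2"])

lemma exists_max_norm_column:
  fixes x :: "'a::real_normed_vector^'n"
  obtains i where "\<And>j. norm (x$j) \<le> norm (x$i)"
proof -
  have "Max (range (\<lambda>j. norm (x$j))) \<in> range (\<lambda>j. norm (x$j))"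
    by (rule Max_in) auto
  then obtain i where "Max (range (\<lambda>j. norm (x$j))) = norm (x$i)"
    by blast
  then have "norm (x$j) \<le> norm (x$i)" for j
    using Max_ge[of "range (\<lambda>j. norm (x$j))" "norm (x$j)"] by simp
  then show ?thesis by (rule that)
qed

lemma norm_diff_le_of_column_norms:
  fixes x y :: "'a::real_normed_vector^'n" and \<pi> :: "'n \<Rightarrow> 'n"
  assumes "bij \<pi>" "\<And>j. \<bar>norm (x$j) - norm (y$(\<pi> j))\<bar> \<le> \<delta>"
  shows "\<bar>norm x - norm y\<bar> \<le> sqrt CARD('n) * \<delta>"
proof -
  have "norm y = norm (\<chi> j. norm (y$(\<pi> j)))"
    using norm_vec_column_norms[of "\<chi> j. y$(\<pi> j)"] norm_vec_permute[OF assms(1), of y] by simp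
  then have "\<bar>norm x - norm y\<bar> = \<bar>norm (\<chi> j. norm (x$j)) - norm (\<chi> j. norm (y$(\<pi> j)))\<bar>"
    by (simp add: norm_vec_column_norms)
  also have "\<dots> \<le> norm ((\<chi> j. norm (x$j)) - (\<chi> j. norm (y$(\<pi> j))))"
    by (rule norm_triangle_ineq3)
  also have "\<dots> \<le> sqrt CARD('n) * \<delta>"
    by (rule norm_vec_le_sqrt_card_mult) (simp add: assms(2))
  finally show ?thesis .
qed

section \<open>Optimal matchings\<close>

lemma Winf_image_mset_le:
  assumes "finite A" "0 \<le> B" "\<And>i. i \<in> A \<Longrightarrow> infnorm (f i - g i) \<le> B"
  shows "Winf (image_mset f (mset_set A)) (image_mset g (mset_set A)) \<le> B"
proof -
  obtain L where L: "distinct L" "set L = A" using finite_distinct_list[OF assms(1)] by blast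
  then have enum: "mset_set A = mset L" by (metis mset_set_set)
  show ?thesis
    unfolding Winf_def
  proof (rule cINF_lower2)
    show "(map f L, map g L)
        \<in> {(xs, ys). mset xs = image_mset f (mset_set A) \<and> mset ys = image_mset g (mset_set A)}"
      by (simp add: enum)
  qed (use assms L in \<open>auto intro!: bdd_belowI[of _ 0]\<close>)
qed

lemma Winf_attained:
  fixes S T :: "'a::euclidean_space multiset"
  obtains xs ys where "mset xs = S" "mset ys = T"
    "\<And>k. k < length xs \<Longrightarrow> infnorm (xs!k - ys!k) \<le> Winf S T"
proof -
  define F :: "'a list \<times> 'a list \<Rightarrow> real" where
    "F p = Max (insert 0 ((\<lambda>i. infnorm (fst p ! i - snd p ! i)) ` {..<length (fst p)}))" for p
  define P where "P = permutations_of_multiset S \<times> permutations_of_multiset T"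
  have "{(xs, ys). mset xs = S \<and> mset ys = T} = P"
    by (auto simp: P_def permutations_of_multiset_def)
  then have "Winf S T = Inf (F ` P)"
    by (simp add: Winf_def F_def)
  moreover have "finite P" "P \<noteq> {}" by (simp_all add: P_def)
  ultimately have "Winf S T \<in> F ` P" by (simp add: cInf_eq_Min)
  then obtain xs ys where "(xs, ys) \<in> P" "Winf S T = F (xs, ys)" by auto
  then show ?thesis
    using that by (auto simp: P_def permutations_of_multiset_def F_def intro: Max_ge)
qed

lemma image_mset_mset_set_bij_betw:
  assumes "bij_betw \<pi> A B"
  shows "image_mset (\<lambda>i. f (\<pi> i)) (mset_set A) = image_mset f (mset_set B)"
proof -
  have "image_mset f (mset_set B) = image_mset f (image_mset \<pi> (mset_set A))"
    using assms by (simp add: bij_betw_def image_mset_mset_set)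
  then show ?thesis by (simp add: multiset.map_comp o_def)
qed

lemma bij_betw_fun_upd_extend:
  assumes "bij_betw f (A - {a}) (B - {b})" "a \<in> A" "b \<in> B"
  shows "bij_betw (f(a := b)) A B"
proof -
  have "bij_betw (f(a := b)) (A - {a}) (B - {b})"
    using assms(1) by (rule bij_betw_cong[THEN iffD1, rotated]) auto
  moreover have "bij_betw (f(a := b)) {a} {b}" by (simp add: bij_betw_def)
  ultimately have "bij_betw (f(a := b)) ((A - {a}) \<union> {a}) ((B - {b}) \<union> {b})"
    by (rule bij_betw_combine) auto
  with assms(2,3) show ?thesis by (simp add: insert_absorb)
qed

lemma bij_betw_of_matched_lists:
  assumes "finite A" "finite B" "length xs = length ys"
    and "mset xs = image_mset f (mset_set A)" "mset ys = image_mset g (mset_set B)"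
    and "\<And>k. k < length xs \<Longrightarrow> P (xs!k) (ys!k)"
  obtains \<sigma> where "bij_betw \<sigma> A B" "\<And>i. i \<in> A \<Longrightarrow> P (f i) (g (\<sigma> i))"
  using assms
proof (induction xs arbitrary: ys A B thesis)
  case Nil
  then have "A = {}" "B = {}" by (auto simp: mset_set_empty_iff)
  then show ?case using Nil.prems(1)[of undefined] by (simp add: bij_betw_def)
next
  case (Cons x xs)
  obtain y ys' where ys: "ys = y # ys'" using Cons.prems(4) by (cases ys) auto
  have "x \<in># image_mset f (mset_set A)" "y \<in># image_mset g (mset_set B)"
    using Cons.prems(5,6) ys by (metis list.set_intros(1) set_mset_mset)+
  then obtain a b where a: "a \<in> A" "x = f a" and b: "b \<in> B" "y = g b"
    using Cons.prems(2,3) by auto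
  have "mset xs = image_mset f (mset_set (A - {a}))"
    using Cons.prems(2,5) a by (simp add: mset_set.remove)
  moreover have "mset ys' = image_mset g (mset_set (B - {b}))"
    using Cons.prems(3,6) ys b by (simp add: mset_set.remove)
  moreover have "P (xs!k) (ys'!k)" if "k < length xs" for k
    using Cons.prems(7)[of "Suc k"] that ys by simp
  ultimately obtain \<tau> where \<tau>: "bij_betw \<tau> (A - {a}) (B - {b})"
      "\<And>i. i \<in> A - {a} \<Longrightarrow> P (f i) (g (\<tau> i))"
    using Cons.IH[where A = "A - {a}" and B = "B - {b}" and ys = ys'] Cons.prems(2-4) ys by auto
  have "P (f a) (g b)" using Cons.prems(7)[of 0] ys a b by simp
  then show ?case
    using Cons.prems(1)[OF bij_betw_fun_upd_extend[OF \<tau>(1) a(1) b(1)]] \<tau>(2) by auto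
qed

lemma Winf_attained_by_bij:
  fixes f g :: "'i \<Rightarrow> 'a::euclidean_space"
  assumes "finite A" "finite B" "card A = card B"
  obtains \<sigma> where "bij_betw \<sigma> A B"
    "\<And>i. i \<in> A \<Longrightarrow> infnorm (f i - g (\<sigma> i))
        \<le> Winf (image_mset f (mset_set A)) (image_mset g (mset_set B))"
proof -
  let ?S = "image_mset f (mset_set A)" and ?T = "image_mset g (mset_set B)"
  obtain xs ys where xs: "mset xs = ?S" "mset ys = ?T"
    and match: "\<And>k. k < length xs \<Longrightarrow> infnorm (xs!k - ys!k) \<le> Winf ?S ?T"
    using Winf_attained[of ?S ?T] by blast
  have "length xs = length ys"
    using xs assms(3) by (metis size_mset size_image_mset size_mset_set)
  from bij_betw_of_matched_lists[OF assms(1,2) this xs,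
       where P = "\<lambda>u v. infnorm (u - v) \<le> Winf ?S ?T"]
  show ?thesis using match that by blast
qed

lemma Winf_attained_by_permutation:
  fixes f g :: "'i::finite \<Rightarrow> 'a::euclidean_space"
  obtains \<sigma> where
    "\<And>i. infnorm (f i - g (\<sigma> i)) \<le> Winf (image_mset f (mset_set UNIV)) (image_mset g (mset_set UNIV))"
proof -
  have "finite (UNIV::'i set)" "finite (UNIV::'i set)" "card (UNIV::'i set) = card (UNIV::'i set)"
    by simp_all
  then obtain \<sigma> where "bij_betw \<sigma> UNIV UNIV"
    "\<And>i. i \<in> UNIV \<Longrightarrow> infnorm (f i - g (\<sigma> i))
      \<le> Winf (image_mset f (mset_set UNIV)) (image_mset g (mset_set UNIV))"
    by (rule Winf_attained_by_bij[where f = f and g = g]) blast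
  then show ?thesis using that by blast
qed

lemma dGplus_nonneg: "0 \<le> dGplus X Y"
  unfolding dGplus_def
  by (rule cINF_greatest) (auto intro: permutes_id mat_1_SO2 simp: sum_nonneg)

lemma dGplus_le:
  assumes "\<pi> permutes UNIV" "R \<in> SO2"
  shows "dGplus X Y \<le> norm (\<chi> j. X$j - R *v Y$(\<pi> j) + t)"
  unfolding dGplus_def norm_vec_eq_sqrt_sum[of "\<chi> j. X$j - R *v Y$(\<pi> j) + t"]
  by (rule cINF_lower2[where x = "(\<pi>, R, t)"])
    (auto intro!: bdd_belowI[of _ 0] sum_nonneg simp: assms)

lemma dGplus_greatest:
  assumes "\<And>\<pi> R t. \<pi> permutes UNIV \<Longrightarrow> R \<in> SO2 \<Longrightarrow> c \<le> norm (\<chi> j. X$j - R *v Y$(\<pi> j) + t)"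
  shows "c \<le> dGplus X Y"
proof -
  have "c \<le> sqrt (\<Sum>j\<in>UNIV. (norm (X$j - R *v Y$(\<pi> j) + t))\<^sup>2)"
    if "\<pi> permutes UNIV" "R \<in> SO2" for \<pi> R t
    using assms[OF that, of t]
    unfolding norm_vec_eq_sqrt_sum[of "\<chi> j. X$j - R *v Y$(\<pi> j) + t"] by simp
  then show ?thesis
    unfolding dGplus_def by (intro cINF_greatest) (auto intro: permutes_id mat_1_SO2)
qed

lemma dGplus_le_centralized:
  fixes X Y :: "real^2^'n::finite"
  assumes "\<pi> permutes UNIV" "R \<in> SO2"
  shows "dGplus X Y \<le> norm (\<chi> j. centralize X $ j - R *v centralize Y $ (\<pi> j))"
proof -
  define mX where "mX = (1 / real CARD('n)) *\<^sub>R (\<Sum>k\<in>UNIV. X$k)"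
  define mY where "mY = (1 / real CARD('n)) *\<^sub>R (\<Sum>k\<in>UNIV. Y$k)"
  have "(\<chi> j. centralize X $ j - R *v centralize Y $ (\<pi> j))
        = (\<chi> j. X$j - R *v Y$(\<pi> j) + (R *v mY - mX))"
    by (simp add: centralize_def mX_def mY_def matrix_vector_mult_diff_distrib algebra_simps)
  then show ?thesis using dGplus_le[OF assms] by simp
qed

section \<open>The invariant and its symmetries\<close>

(* edge_feature x i j is the triple attached to the pair (i, j) in the definition of H, and
   point_feature psi x i is h_i when x is the centred configuration. *)
definition edge_feature :: "real^2^'n \<Rightarrow> 'n \<Rightarrow> 'n \<Rightarrow> real^3" where
  "edge_feature x i j = vector [(x$i \<bullet> x$j) / norm x, (perp2 (x$i) \<bullet> x$j) / norm x, norm (x$j)]"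

definition point_feature :: "(real \<Rightarrow> (real^3) multiset \<Rightarrow> 'd) \<Rightarrow> real^2^'n \<Rightarrow> 'n \<Rightarrow> 'd" where
  "point_feature psi x i = psi (norm (x$i)) (image_mset (edge_feature x i) (mset_set (UNIV - {i})))"

definition point_features :: "(real \<Rightarrow> (real^3) multiset \<Rightarrow> 'd) \<Rightarrow> real^2^'n \<Rightarrow> 'd multiset" where
  "point_features psi x = image_mset (point_feature psi x) (mset_set UNIV)"

lemma edge_feature_nth [simp]:
  "edge_feature x i j $ 1 = (x$i \<bullet> x$j) / norm x"
  "edge_feature x i j $ 2 = (perp2 (x$i) \<bullet> x$j) / norm x"
  "edge_feature x i j $ 3 = norm (x$j)"
  by (simp_all add: edge_feature_def)

lemma size_edge_features:
  "size (image_mset (edge_feature x i) (mset_set (UNIV - {i}))) = CARD('n::finite) - 1"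
  for x :: "real^2^'n"
  by (simp add: card_Diff_singleton)

lemma size_point_features: "size (point_features psi (x::real^2^'n::finite)) = CARD('n)"
  by (simp add: point_features_def)

lemma homog_psi_zero:
  assumes "homog_psi N psi" "size M = N"
  shows "psi 0 (image_mset (\<lambda>_. 0) M) = 0"
proof -
  have "psi 0 (image_mset (\<lambda>_. 0) M) = psi (2 *\<^sub>R 0) (image_mset (scaleR 2) (image_mset (\<lambda>_. 0) M))"
    by (simp add: multiset.map_comp o_def)
  also have "\<dots> = 2 *\<^sub>R psi 0 (image_mset (\<lambda>_. 0) M)"
    using assms unfolding homog_psi_def
    by (metis scale_zero_right size_image_mset zero_less_numeral)
  finally show ?thesis by (simp add: scaleR_2)
qed

lemma homog_phi_zero:
  assumes "homog_phi N phi" "size M = N"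
  shows "phi (image_mset (\<lambda>_. 0) M) = 0"
proof -
  have "phi (image_mset (\<lambda>_. 0) M) = phi (image_mset (scaleR 2) (image_mset (\<lambda>_. 0) M))"
    by (simp add: multiset.map_comp o_def)
  also have "\<dots> = 2 *\<^sub>R phi (image_mset (\<lambda>_. 0) M)"
    using assms unfolding homog_phi_def by (metis size_image_mset zero_less_numeral)
  finally show ?thesis by (simp add: scaleR_2)
qed

(* The only use of homogeneity: psi and phi vanish on zero data, so the case distinction in the
   definition of H is immaterial. *)
lemma Hmap_eq_point_features:
  fixes psi :: "real \<Rightarrow> (real^3) multiset \<Rightarrow> 'd::euclidean_space"
    and phi :: "'d multiset \<Rightarrow> 'e::real_vector"
  assumes "homog_psi (CARD('n::finite) - 1) psi" "homog_phi CARD('n) phi"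
  shows "Hmap psi phi (X::real^2^'n) = phi (point_features psi (centralize X))"
proof (cases "centralize X = 0")
  case True
  have "point_feature psi (0::real^2^'n) i = 0" for i
  proof -
    have "edge_feature (0::real^2^'n) i = (\<lambda>_. 0)"
      by (simp add: fun_eq_iff vec_eq_iff forall_3 edge_feature_def)
    then have "point_feature psi (0::real^2^'n) i
        = psi 0 (image_mset (\<lambda>_. 0) (mset_set (UNIV - {i})))"
      by (simp add: point_feature_def)
    also have "\<dots> = 0"
      by (rule homog_psi_zero[OF assms(1)]) (simp add: card_Diff_singleton)
    finally show ?thesis .
  qed
  then have "point_feature psi (0::real^2^'n) = (\<lambda>_. 0)"
    by (simp add: fun_eq_iff)
  then have "point_features psi (0::real^2^'n) = image_mset (\<lambda>_. 0) (mset_set (UNIV::'n set))"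
    by (simp add: point_features_def)
  then show ?thesis
    using True homog_phi_zero[OF assms(2), of "mset_set (UNIV::'n set)"] by (simp add: Hmap_def)
next
  case False
  then show ?thesis
    by (simp add: Hmap_def Let_def point_features_def
        point_feature_def[abs_def] edge_feature_def[abs_def])
qed

lemma centralize_rigid_motion:
  fixes Y :: "real^2^'n::finite" and \<pi> :: "'n \<Rightarrow> 'n"
  assumes "bij \<pi>"
  shows "centralize (\<chi> j. R *v Y$(\<pi> j) - t) = (\<chi> j. R *v centralize Y $ (\<pi> j))"
proof -
  have "(\<Sum>k\<in>UNIV. R *v Y$(\<pi> k)) = (\<Sum>k\<in>UNIV. R *v Y$k)"
    using sum.reindex_bij_betw[of \<pi> UNIV UNIV "\<lambda>k. R *v Y$k"] assms by simp
  then have "(\<Sum>k\<in>UNIV. R *v Y$(\<pi> k) - t) = R *v (\<Sum>k\<in>UNIV. Y$k) - real CARD('n) *\<^sub>R t"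
    by (simp add: sum_subtractf linear_sum[OF matrix_vector_mul_linear] o_def sum_constant_scaleR
        del: sum_constant)
  moreover have "real CARD('n) \<noteq> 0" by simp
  ultimately show ?thesis
    by (simp add: centralize_def vec_eq_iff matrix_vector_mult_diff_distrib
        matrix_vector_mult_scaleR
        diff_divide_distrib)
qed

lemma norm_rigid_motion:
  fixes y :: "real^2^'n::finite" and \<pi> :: "'n \<Rightarrow> 'n"
  assumes "R \<in> SO2" "bij \<pi>"
  shows "norm (\<chi> j. R *v y$(\<pi> j)) = norm y"
proof -
  have "norm (\<chi> j. R *v y$(\<pi> j)) = norm (\<chi> j. y$(\<pi> j))"
    using assms(1) unfolding norm_vec_eq_sqrt_sum[of "\<chi> j. R *v y$(\<pi> j)"]
      norm_vec_eq_sqrt_sum[of "\<chi> j. y$(\<pi> j)"] by (simp add: SO2_norm)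
  also have "\<dots> = norm y" using assms(2) by (rule norm_vec_permute)
  finally show ?thesis .
qed

lemma edge_feature_rigid_motion:
  fixes y :: "real^2^'n::finite" and \<pi> :: "'n \<Rightarrow> 'n"
  assumes "R \<in> SO2" "bij \<pi>"
  shows "edge_feature (\<chi> j. R *v y$(\<pi> j)) i j = edge_feature y (\<pi> i) (\<pi> j)"
  using assms by (simp add: edge_feature_def norm_rigid_motion SO2_inner SO2_norm flip: SO2_perp2)

lemma point_features_rigid_motion:
  fixes y :: "real^2^'n::finite" and \<pi> :: "'n \<Rightarrow> 'n"
  assumes "R \<in> SO2" "bij \<pi>"
  shows "point_features psi (\<chi> j. R *v y$(\<pi> j)) = point_features psi y"
proof -
  have "point_feature psi (\<chi> j. R *v y$(\<pi> j)) i = point_feature psi y (\<pi> i)" for i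
  proof -
    have "image_mset (edge_feature (\<chi> j. R *v y$(\<pi> j)) i) (mset_set (UNIV - {i}))
        = image_mset (\<lambda>j. edge_feature y (\<pi> i) (\<pi> j)) (mset_set (UNIV - {i}))"
      using assms by (intro image_mset_cong) (simp add: edge_feature_rigid_motion)
    also have "\<dots> = image_mset (edge_feature y (\<pi> i)) (mset_set (UNIV - {\<pi> i}))"
      using assms(2) by (intro image_mset_mset_set_bij_betw bij_betw_DiffI)
      (auto simp: bij_betw_def)
    finally show ?thesis
      using assms(1) by (simp add: point_feature_def SO2_norm)
  qed
  then have "point_features psi (\<chi> j. R *v y$(\<pi> j))
        = image_mset (\<lambda>i. point_feature psi y (\<pi> i)) (mset_set UNIV)"
    unfolding point_features_def by (intro image_mset_cong) simp
  also have "\<dots> = point_features psi y"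
    unfolding point_features_def using assms(2)
    by (intro image_mset_mset_set_bij_betw) (simp add: bij_betw_def)
  finally show ?thesis .
qed

lemma Hmap_rigid_motion:
  fixes psi :: "real \<Rightarrow> (real^3) multiset \<Rightarrow> 'd::euclidean_space"
    and phi :: "'d multiset \<Rightarrow> 'e::real_vector" and \<pi> :: "'n::finite \<Rightarrow> 'n"
  assumes "homog_psi (CARD('n) - 1) psi" "homog_phi CARD('n) phi"
    and "R \<in> SO2" "bij \<pi>"
  shows "Hmap psi phi (\<chi> j. R *v (Y::real^2^'n)$(\<pi> j) - t) = Hmap psi phi Y"
proof -
  have "Hmap psi phi (\<chi> j. R *v Y$(\<pi> j) - t)
        = phi (point_features psi (\<chi> j. R *v centralize Y $ (\<pi> j)))"
    using assms by (simp add: Hmap_eq_point_features centralize_rigid_motion)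
  also have "\<dots> = Hmap psi phi Y"
    using assms by (simp add: Hmap_eq_point_features point_features_rigid_motion)
  finally show ?thesis .
qed

section \<open>Upper Lipschitz bound\<close>

lemma centralize_diff: "centralize (X - Y) = centralize X - centralize Y"
  by (simp add: centralize_def vec_eq_iff sum_subtractf scaleR_diff_right)

lemma norm_centralize_le: "norm (centralize (Z::real^2^'n::finite)) \<le> norm Z"
proof -
  define m where "m = (1 / real CARD('n)) *\<^sub>R (\<Sum>k\<in>UNIV. Z$k)"
  have sum: "(\<Sum>k\<in>UNIV. Z$k) = real CARD('n) *\<^sub>R m" by (simp add: m_def)
  have "(norm (centralize Z))\<^sup>2 = (\<Sum>j\<in>UNIV. (norm (Z$j - m))\<^sup>2)"
    by (simp add: power2_norm_vec_eq_sum centralize_def m_def)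
  also have "\<dots> = (\<Sum>j\<in>UNIV. (norm (Z$j))\<^sup>2 - 2 * (Z$j \<bullet> m) + (norm m)\<^sup>2)"
    by (simp add: power2_norm_eq_inner inner_diff_left inner_diff_right inner_commute algebra_simps)
  also have "\<dots> = (\<Sum>j\<in>UNIV. (norm (Z$j))\<^sup>2) - 2 * ((\<Sum>j\<in>UNIV. Z$j) \<bullet> m) + real CARD('n) * (norm m)\<^sup>2"
    by (simp add: sum.distrib sum_subtractf sum_distrib_left inner_sum_left)
  also have "\<dots> = (\<Sum>j\<in>UNIV. (norm (Z$j))\<^sup>2) - real CARD('n) * (norm m)\<^sup>2"
    by (simp add: sum power2_norm_eq_inner)
  also have "\<dots> \<le> (norm Z)\<^sup>2" by (simp add: power2_norm_vec_eq_sum[of Z])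
  finally show ?thesis by (simp add: power2_le_iff_abs_le)
qed

lemma edge_feature_lipschitz:
  "infnorm (edge_feature x i j - edge_feature y i j) \<le> 3 * norm (x - y)"
proof -
  define d where "d = norm (x - y)"
  have column: "norm (x$k - y$k) \<le> d" for k
    using Finite_Cartesian_Product.norm_nth_le[of "x - y" k] by (simp add: d_def)
  have "\<bar>norm x - norm y\<bar> \<le> d" unfolding d_def by (rule norm_triangle_ineq3)
  then have "\<bar>(x$i \<bullet> x$j) / norm x - (y$i \<bullet> y$j) / norm y\<bar> \<le> 3 * d"
    and "\<bar>(perp2 (x$i) \<bullet> x$j) / norm x - (perp2 (y$i) \<bullet> y$j) / norm y\<bar> \<le> 3 * d"
    using column by (auto intro!: normalized_inner_diff_le
      simp: Finite_Cartesian_Product.norm_nth_le simp flip: perp2_diff)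
  moreover have "\<bar>norm (x$j) - norm (y$j)\<bar> \<le> 3 * d"
    using norm_triangle_ineq3[of "x$j" "y$j"] column[of j] by (simp add: d_def)
  ultimately show ?thesis
    by (intro infnorm_real3_le) (simp_all add: d_def)
qed

lemma point_feature_lipschitz:
  fixes psi :: "real \<Rightarrow> (real^3) multiset \<Rightarrow> 'd::euclidean_space" and x y :: "real^2^'n::finite"
  assumes psi_le: "\<And>v v' S S'. size S = CARD('n) - 1 \<Longrightarrow> size S' = CARD('n) - 1 \<Longrightarrow>
      infnorm (psi v S - psi v' S') \<le> C * max (infnorm (v - v')) (Winf S S')"
    and "0 \<le> C"
  shows "infnorm (point_feature psi x i - point_feature psi y i) \<le> C * (3 * norm (x - y))"
proof -
  have "\<bar>norm (x$i) - norm (y$i)\<bar> \<le> 3 * norm (x - y)"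
    using norm_triangle_ineq3[of "x$i" "y$i"]
      Finite_Cartesian_Product.norm_nth_le[of "x - y" i] by simp
  moreover have "Winf (image_mset (edge_feature x i) (mset_set (UNIV - {i})))
      (image_mset (edge_feature y i) (mset_set (UNIV - {i}))) \<le> 3 * norm (x - y)"
    by (intro Winf_image_mset_le edge_feature_lipschitz) simp_all
  ultimately show ?thesis
    unfolding point_feature_def
    by (intro order_trans[OF psi_le[OF size_edge_features size_edge_features]] mult_left_mono)
      (simp_all add: infnorm_real \<open>0 \<le> C\<close>)
qed

lemma Hmap_lipschitz:
  fixes psi :: "real \<Rightarrow> (real^3) multiset \<Rightarrow> 'd::euclidean_space"
    and phi :: "'d multiset \<Rightarrow> 'e::euclidean_space" and X Y :: "real^2^'n::finite"
  assumes "homog_psi (CARD('n) - 1) psi" "homog_phi CARD('n) phi"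
    and psi_le: "\<And>v v' S S'. size S = CARD('n) - 1 \<Longrightarrow> size S' = CARD('n) - 1 \<Longrightarrow>
      infnorm (psi v S - psi v' S') \<le> C * max (infnorm (v - v')) (Winf S S')"
    and phi_le: "\<And>S S'. size S = CARD('n) \<Longrightarrow> size S' = CARD('n) \<Longrightarrow>
      infnorm (phi S - phi S') \<le> D * Winf S S'"
    and "0 \<le> C" "0 \<le> D"
  shows "infnorm (Hmap psi phi X - Hmap psi phi Y) \<le> 3 * C * D * norm (X - Y)"
proof -
  let ?x = "centralize X" and ?y = "centralize Y"
  have "Winf (point_features psi ?x) (point_features psi ?y) \<le> C * (3 * norm (?x - ?y))"
    unfolding point_features_def using \<open>0 \<le> C\<close>
    by (intro Winf_image_mset_le point_feature_lipschitz[OF psi_le]) simp_all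
  also have "\<dots> \<le> C * (3 * norm (X - Y))"
    using \<open>0 \<le> C\<close> norm_centralize_le[of "X - Y"] by (simp add: centralize_diff mult_left_mono)
  finally have W: "Winf (point_features psi ?x) (point_features psi ?y) \<le> C * (3 * norm (X - Y))" .
  have "infnorm (Hmap psi phi X - Hmap psi phi Y)
        = infnorm (phi (point_features psi ?x) - phi (point_features psi ?y))"
    using assms(1,2) by (simp add: Hmap_eq_point_features)
  also have "\<dots> \<le> D * Winf (point_features psi ?x) (point_features psi ?y)"
    by (rule phi_le) (simp_all add: size_point_features)
  also have "\<dots> \<le> D * (C * (3 * norm (X - Y)))"
    using W \<open>0 \<le> D\<close> by (rule mult_left_mono)
  finally show ?thesis by (simp add: mult_ac)
qed

lemma Hmap_upper_bound:
  fixes psi :: "real \<Rightarrow> (real^3) multiset \<Rightarrow> 'd::euclidean_space"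
    and phi :: "'d multiset \<Rightarrow> 'e::euclidean_space" and X Y :: "real^2^'n::finite"
  assumes "homog_psi (CARD('n) - 1) psi" "homog_phi CARD('n) phi"
    and psi_le: "\<And>v v' S S'. size S = CARD('n) - 1 \<Longrightarrow> size S' = CARD('n) - 1 \<Longrightarrow>
      infnorm (psi v S - psi v' S') \<le> C * max (infnorm (v - v')) (Winf S S')"
    and phi_le: "\<And>S S'. size S = CARD('n) \<Longrightarrow> size S' = CARD('n) \<Longrightarrow>
      infnorm (phi S - phi S') \<le> D * Winf S S'"
    and "0 < C" "0 < D"
  shows "infnorm (Hmap psi phi X - Hmap psi phi Y) \<le> 3 * C * D * dGplus X Y"
proof -
  define b where "b = 3 * C * D"
  have b: "0 < b" using \<open>0 < C\<close> \<open>0 < D\<close> by (simp add: b_def)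
  have "infnorm (Hmap psi phi X - Hmap psi phi Y) / b \<le> dGplus X Y"
  proof (rule dGplus_greatest)
    fix \<pi> :: "'n \<Rightarrow> 'n" and R t assume "\<pi> permutes UNIV" "R \<in> SO2"
    define Y' where "Y' = (\<chi> j. R *v Y$(\<pi> j) - t)"
    have "Hmap psi phi Y = Hmap psi phi Y'"
      unfolding Y'_def using assms(1,2) \<open>R \<in> SO2\<close> permutes_bij[OF \<open>\<pi> permutes UNIV\<close>]
      by (simp add: Hmap_rigid_motion)
    moreover have "infnorm (Hmap psi phi X - Hmap psi phi Y') \<le> b * norm (X - Y')"
      unfolding b_def using assms(1-4) \<open>0 < C\<close> \<open>0 < D\<close> by (intro Hmap_lipschitz) simp_all
    moreover have "X - Y' = (\<chi> j. X$j - R *v Y$(\<pi> j) + t)"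
      by (simp add: Y'_def vec_eq_iff)
    ultimately show "infnorm (Hmap psi phi X - Hmap psi phi Y) / b
        \<le> norm (\<chi> j. X$j - R *v Y$(\<pi> j) + t)"
      using b by (simp add: divide_le_eq mult.commute)
  qed
  then show ?thesis using b by (simp add: b_def divide_le_eq mult.commute)
qed

section \<open>Lower Lipschitz bound\<close>

(* Columns are compared through their coordinates in the frames (x$i, perp2 (x$i)) and
   (y$k, perp2 (y$k)), which R identifies. Edge features give these coordinates normalised by
   norm x instead of norm (x$i); the bound norm x \<le> s * norm (x$i) controls the exchange. *)
lemma aligned_column_le:
  fixes x y :: "real^2^'n::finite"
  assumes nonzero: "x$i \<noteq> 0" "y$k \<noteq> 0"
    and R: "R \<in> SO2" "R *v y$k = (norm (y$k) / norm (x$i)) *\<^sub>R x$i"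
    and s: "0 \<le> s" "norm x \<le> s * norm (x$i)" "\<bar>norm x - norm y\<bar> \<le> s * \<delta>"
    and norm_i: "\<bar>norm (x$i) - norm (y$k)\<bar> \<le> \<delta>"
    and features: "infnorm (edge_feature x i j - edge_feature y k l) \<le> \<delta>"
  shows "norm (x$j - R *v y$l) \<le> 6 * s * \<delta>"
proof -
  have pos: "0 < norm x" "0 < norm y" "0 < norm (x$i)" "0 < norm (y$k)"
    using nonzero by (auto simp: vec_eq_iff)
  have "norm (y$l) \<le> norm y" by (rule Finite_Cartesian_Product.norm_nth_le)
  then have bounds: "\<bar>y$k \<bullet> y$l\<bar> \<le> norm (y$k) * norm y" "\<bar>perp2 (y$k) \<bullet> y$l\<bar> \<le> norm (y$k) * norm y"
    by (simp_all add: abs_inner_le_mult)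
  have c: "\<bar>(x$i \<bullet> x$j) / norm x - (y$k \<bullet> y$l) / norm y\<bar> \<le> \<delta>"
    "\<bar>(perp2 (x$i) \<bullet> x$j) / norm x - (perp2 (y$k) \<bullet> y$l) / norm y\<bar> \<le> \<delta>"
    using component_le_infnorm_cart[of "edge_feature x i j - edge_feature y k l" 1]
      component_le_infnorm_cart[of "edge_feature x i j - edge_feature y k l" 2] features
    by simp_all
  define a where "a = (x$i \<bullet> x$j) / norm (x$i) - (y$k \<bullet> y$l) / norm (y$k)"
  define b where "b = (perp2 (x$i) \<bullet> x$j) / norm (x$i) - (perp2 (y$k) \<bullet> y$l) / norm (y$k)"
  have "\<bar>a\<bar> \<le> 3 * s * \<delta>"
    unfolding a_def by (rule rescaled_quotient_diff_le[OF pos s(1) c(1) norm_i s(3,2) bounds(1)])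
  moreover have "\<bar>b\<bar> \<le> 3 * s * \<delta>"
    unfolding b_def by (rule rescaled_quotient_diff_le[OF pos s(1) c(2) norm_i s(3,2) bounds(2)])
  moreover have "norm (x$j - R *v y$l) = sqrt (a\<^sup>2 + b\<^sup>2)"
    using real_sqrt_unique[OF norm_diff_in_frames[OF nonzero R, of "x$j" "y$l"] norm_ge_zero]
    by (simp add: a_def b_def inner_commute)
  ultimately show ?thesis
    using sqrt_sum_squares_le_sum_abs[of a b] by linarith
qed

lemma columns_close_of_vanishing_max_column:
  fixes x y :: "'a::real_normed_vector^'n" and \<pi> :: "'n \<Rightarrow> 'n"
  assumes "x$i = 0 \<or> y$(\<pi> i) = 0" "0 \<le> \<delta>" "\<And>j. norm (x$j) \<le> norm (x$i)"
    and norms: "\<And>j. \<bar>norm (x$j) - norm (y$(\<pi> j))\<bar> \<le> \<delta>"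
  shows "norm (x$j - y$(\<pi> j)) \<le> 3 * \<delta>"
  using norm_triangle_ineq4[of "x$j" "y$(\<pi> j)"] assms(1,2) assms(3)[of j] norms[of j] norms[of i]
  by auto

lemma rotation_aligning_local_features:
  fixes x y :: "real^2^'n::finite" and \<pi> :: "'n \<Rightarrow> 'n"
  assumes "bij \<pi>" "0 \<le> \<delta>"
    and i_max: "\<And>j. norm (x$j) \<le> norm (x$i)"
    and norm_i: "\<bar>norm (x$i) - norm (y$(\<pi> i))\<bar> \<le> \<delta>"
    and features: "\<And>j. j \<noteq> i \<Longrightarrow> infnorm (edge_feature x i j - edge_feature y (\<pi> i) (\<pi> j)) \<le> \<delta>"
  obtains R where "R \<in> SO2" "\<And>j. norm (x$j - R *v y$(\<pi> j)) \<le> 6 * sqrt CARD('n) * \<delta>"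
proof -
  define s where "s = sqrt CARD('n)"
  have "1 \<le> s" by (simp add: s_def)
  have norms: "\<bar>norm (x$j) - norm (y$(\<pi> j))\<bar> \<le> \<delta>" for j
  proof (cases "j = i")
    case False
    then show ?thesis
      using component_le_infnorm_cart[of "edge_feature x i j - edge_feature y (\<pi> i) (\<pi> j)" 3]
        features[OF False] by simp
  qed (use norm_i in simp)
  have total: "\<bar>norm x - norm y\<bar> \<le> s * \<delta>"
    unfolding s_def using assms(1) norms by (rule norm_diff_le_of_column_norms)
  have max: "norm x \<le> s * norm (x$i)"
    unfolding s_def using i_max by (rule norm_vec_le_sqrt_card_mult)
  have "3 * \<delta> \<le> 6 * s * \<delta>" using \<open>1 \<le> s\<close> \<open>0 \<le> \<delta>\<close> by (simp add: mult_right_mono)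
  show ?thesis
  proof (cases "x$i = 0 \<or> y$(\<pi> i) = 0")
    case True
    have "norm (x$j - mat 1 *v y$(\<pi> j)) \<le> 6 * s * \<delta>" for j
      using order_trans[OF columns_close_of_vanishing_max_column[OF True \<open>0 \<le> \<delta>\<close> i_max norms]
          \<open>3 * \<delta> \<le> 6 * s * \<delta>\<close>] by simp
    then show ?thesis using that mat_1_SO2 unfolding s_def by blast
  next
    case False
    then have nonzero: "x$i \<noteq> 0" "y$(\<pi> i) \<noteq> 0" by auto
    obtain R where R: "R \<in> SO2" "R *v y$(\<pi> i) = (norm (y$(\<pi> i)) / norm (x$i)) *\<^sub>R x$i"
      using SO2_transitive_on_circles[of "(norm (y$(\<pi> i)) / norm (x$i)) *\<^sub>R x$i" "y$(\<pi> i)"] nonzero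
      by auto
    have "norm (x$j - R *v y$(\<pi> j)) \<le> 6 * s * \<delta>" for j
    proof (cases "j = i")
      case True
      have "x$i - R *v y$(\<pi> i) = ((norm (x$i) - norm (y$(\<pi> i))) / norm (x$i)) *\<^sub>R x$i"
        using nonzero by (simp add: R(2) diff_divide_distrib scaleR_diff_left)
      then have "norm (x$j - R *v y$(\<pi> j)) = \<bar>norm (x$i) - norm (y$(\<pi> i))\<bar>"
        using nonzero True by simp
      then show ?thesis using norm_i \<open>3 * \<delta> \<le> 6 * s * \<delta>\<close> \<open>0 \<le> \<delta>\<close> by linarith
    next
      case False
      show ?thesis
        using \<open>1 \<le> s\<close>
        by (intro aligned_column_le[OF nonzero R _ max total norm_i features[OF False]]) simp
    qed
    then show ?thesis using that R(1) unfolding s_def by blast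
  qed
qed

lemma local_matching_of_point_features:
  fixes psi :: "real \<Rightarrow> (real^3) multiset \<Rightarrow> 'd::euclidean_space" and x y :: "real^2^'n::finite"
  assumes psi_ge: "\<And>v v' S S'. size S = CARD('n) - 1 \<Longrightarrow> size S' = CARD('n) - 1 \<Longrightarrow>
      c * max (infnorm (v - v')) (Winf S S') \<le> infnorm (psi v S - psi v' S')"
    and "0 < c" and close: "infnorm (point_feature psi x i - point_feature psi y k) \<le> c * \<delta>"
  obtains \<pi> where "bij \<pi>" "\<pi> i = k" "\<bar>norm (x$i) - norm (y$k)\<bar> \<le> \<delta>"
    "\<And>j. j \<noteq> i \<Longrightarrow> infnorm (edge_feature x i j - edge_feature y k (\<pi> j)) \<le> \<delta>"
proof -
  let ?Ex = "image_mset (edge_feature x i) (mset_set (UNIV - {i}))"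
  let ?Ey = "image_mset (edge_feature y k) (mset_set (UNIV - {k}))"
  have "c * max (infnorm (norm (x$i) - norm (y$k))) (Winf ?Ex ?Ey) \<le> c * \<delta>"
    using psi_ge[OF size_edge_features size_edge_features] close
    unfolding point_feature_def by (rule order_trans)
  then have norm_i: "\<bar>norm (x$i) - norm (y$k)\<bar> \<le> \<delta>" and W: "Winf ?Ex ?Ey \<le> \<delta>"
    using \<open>0 < c\<close> by (simp_all add: infnorm_real)
  have "finite (UNIV - {i})" "finite (UNIV - {k})" "card (UNIV - {i}) = card (UNIV - {k})"
    by (simp_all add: card_Diff_singleton)
  then obtain \<tau> where \<tau>: "bij_betw \<tau> (UNIV - {i}) (UNIV - {k})"
    "\<And>j. j \<in> UNIV - {i} \<Longrightarrow> infnorm (edge_feature x i j - edge_feature y k (\<tau> j)) \<le> Winf ?Ex ?Ey"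
    by (rule Winf_attained_by_bij[where f = "edge_feature x i" and g = "edge_feature y k"]) blast
  have "bij (\<tau>(i := k))"
    using bij_betw_fun_upd_extend[OF \<tau>(1)] by simp
  then show ?thesis
    using that[of "\<tau>(i := k)"] \<tau>(2) W norm_i by fastforce
qed

lemma Hmap_lower_bound:
  fixes psi :: "real \<Rightarrow> (real^3) multiset \<Rightarrow> 'd::euclidean_space"
    and phi :: "'d multiset \<Rightarrow> 'e::euclidean_space" and X Y :: "real^2^'n::finite"
  assumes "homog_psi (CARD('n) - 1) psi" "homog_phi CARD('n) phi"
    and psi_ge: "\<And>v v' S S'. size S = CARD('n) - 1 \<Longrightarrow> size S' = CARD('n) - 1 \<Longrightarrow>
      c * max (infnorm (v - v')) (Winf S S') \<le> infnorm (psi v S - psi v' S')"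
    and phi_ge: "\<And>S S'. size S = CARD('n) \<Longrightarrow> size S' = CARD('n) \<Longrightarrow>
      c' * Winf S S' \<le> infnorm (phi S - phi S')"
    and "0 < c" "0 < c'"
  shows "c * c' / (6 * CARD('n)) * dGplus X Y \<le> infnorm (Hmap psi phi X - Hmap psi phi Y)"
proof -
  define x y where "x = centralize X" and "y = centralize Y"
  define \<delta> where "\<delta> = infnorm (Hmap psi phi X - Hmap psi phi Y) / (c * c')"
  have "0 \<le> \<delta>" using \<open>0 < c\<close> \<open>0 < c'\<close> by (simp add: \<delta>_def infnorm_pos_le)
  have "c' * Winf (point_features psi x) (point_features psi y) \<le> c' * (c * \<delta>)"
    using phi_ge[OF size_point_features size_point_features] assms(1,2) \<open>0 < c\<close> \<open>0 < c'\<close>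
    by (simp add: \<delta>_def x_def y_def Hmap_eq_point_features)
  then have W: "Winf (point_features psi x) (point_features psi y) \<le> c * \<delta>"
    using \<open>0 < c'\<close> by simp
  obtain \<sigma> where "\<And>i. infnorm (point_feature psi x i - point_feature psi y (\<sigma> i))
      \<le> Winf (point_features psi x) (point_features psi y)"
    unfolding point_features_def
    using Winf_attained_by_permutation[of "point_feature psi x" "point_feature psi y"] by blast
  with W have \<sigma>: "infnorm (point_feature psi x i - point_feature psi y (\<sigma> i)) \<le> c * \<delta>" for i
    by (meson order_trans)
  obtain i where i_max: "\<And>j. norm (x$j) \<le> norm (x$i)"
    using exists_max_norm_column[of x] by blast
  obtain \<pi> where \<pi>: "bij \<pi>" "\<pi> i = \<sigma> i" "\<bar>norm (x$i) - norm (y$(\<sigma> i))\<bar> \<le> \<delta>"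
    "\<And>j. j \<noteq> i \<Longrightarrow> infnorm (edge_feature x i j - edge_feature y (\<sigma> i) (\<pi> j)) \<le> \<delta>"
    using local_matching_of_point_features[OF psi_ge \<open>0 < c\<close> \<sigma>] by blast
  then have "\<bar>norm (x$i) - norm (y$(\<pi> i))\<bar> \<le> \<delta>"
    "\<And>j. j \<noteq> i \<Longrightarrow> infnorm (edge_feature x i j - edge_feature y (\<pi> i) (\<pi> j)) \<le> \<delta>"
    by simp_all
  then obtain R where R: "R \<in> SO2" "\<And>j. norm (x$j - R *v y$(\<pi> j)) \<le> 6 * sqrt CARD('n) * \<delta>"
    using rotation_aligning_local_features[OF \<pi>(1) \<open>0 \<le> \<delta>\<close> i_max] by blast
  have "dGplus X Y \<le> norm (\<chi> j. x$j - R *v y$(\<pi> j))"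
    unfolding x_def y_def using bij_imp_permutes[OF \<pi>(1)] R(1)
    by (rule dGplus_le_centralized) simp
  also have "\<dots> \<le> sqrt CARD('n) * (6 * sqrt CARD('n) * \<delta>)"
    by (rule norm_vec_le_sqrt_card_mult) (simp add: R(2))
  also have "\<dots> = 6 * CARD('n) * \<delta>" by simp
  finally show ?thesis
    using \<open>0 < c\<close> \<open>0 < c'\<close> by (simp add: \<delta>_def field_simps)
qed

theorem theorem4:
  fixes psi :: "real \<Rightarrow> (real^3) multiset \<Rightarrow> 'd::euclidean_space"
    and phi :: "'d multiset \<Rightarrow> real^'m"
  assumes "CARD('n::finite) \<ge> 2"
    and "homog_psi (CARD('n) - 1) psi" and "bilip_psi (CARD('n) - 1) psi"
    and "homog_phi (CARD('n)) phi" and "bilip_phi (CARD('n)) phi"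
  shows "\<exists>a b. 0 < a \<and> a \<le> b \<and>
    (\<forall>X Y :: real^2^'n.
       a * dGplus X Y \<le> infnorm (Hmap psi phi X - Hmap psi phi Y) \<and>
       infnorm (Hmap psi phi X - Hmap psi phi Y) \<le> b * dGplus X Y)"
proof -
  obtain c C where c: "0 < c" "c \<le> C"
    and psi: "\<And>v v' S S'. size S = CARD('n) - 1 \<Longrightarrow> size S' = CARD('n) - 1 \<Longrightarrow>
      c * max (infnorm (v - v')) (Winf S S') \<le> infnorm (psi v S - psi v' S') \<and>
      infnorm (psi v S - psi v' S') \<le> C * max (infnorm (v - v')) (Winf S S')"
    using assms(3) unfolding bilip_psi_def by blast
  obtain c' C' where c': "0 < c'" "c' \<le> C'"
    and phi: "\<And>S S'. size S = CARD('n) \<Longrightarrow> size S' = CARD('n) \<Longrightarrow>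
      c' * Winf S S' \<le> infnorm (phi S - phi S') \<and> infnorm (phi S - phi S') \<le> C' * Winf S S'"
    using assms(5) unfolding bilip_phi_def by blast
  define b where "b = 3 * C * C'"
  define a where "a = min (c * c' / (6 * CARD('n))) b"
  have "0 < a" "a \<le> b" using c c' by (simp_all add: a_def b_def)
  moreover have "infnorm (Hmap psi phi X - Hmap psi phi Y) \<le> b * dGplus X Y" for X Y :: "real^2^'n"
    unfolding b_def using assms(2,4) psi phi c c' by (intro Hmap_upper_bound) auto
  moreover have "a * dGplus X Y \<le> infnorm (Hmap psi phi X - Hmap psi phi Y)" for X Y :: "real^2^'n"
  proof -
    have "a * dGplus X Y \<le> c * c' / (6 * CARD('n)) * dGplus X Y"
      using dGplus_nonneg[of X Y] by (intro mult_right_mono) (simp_all add: a_def)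
    also have "\<dots> \<le> infnorm (Hmap psi phi X - Hmap psi phi Y)"
      using assms(2,4) psi phi c c' by (intro Hmap_lower_bound) auto
    finally show ?thesis .
  qed
  ultimately show ?thesis by blast
qed

end
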